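(* Fix $\mu\in\mathcal P$ and subspaces $\bar X^R,\bar X^R_{(1)},\bar X^R_{(2)},\bar X^R_{(3)}\subset\bar X$. Let $\bar u\in\bar X$ satisfy $\bar a(\bar u,v)=\bar f(v)$ $\forall v\in\bar X$; $\bar u^R\in\bar X^R$ satisfy $\bar a(\bar u^R,v)=\bar f(v)$ $\forall v\in\bar X^R$; and let $\bar u^R_{(1)}\in\bar X^R_{(1)}$ satisfy $\bar a(v,\bar u^R_{(1)})=-\bar l(v)$ $\forall v\in\bar X^R_{(1)}$, $\bar u^R_{(2)}\in\bar X^R_{(2)}$ satisfy $\bar a(v,\bar u^R_{(2)})=-2E[l(\bar u^R)l(v)]$ $\forall v\in\bar X^R_{(2)}$, $\bar u^R_{(3)}\in\bar X^R_{(3)}$ satisfy $\bar a(v,\bar u^R_{(3)})=-2\big(\bar l(\bar u^R)-\bar r(\bar u^R_{(1)})\big)\bar l(v)$ $\forall v\in\bar X^R_{(3)}$. Define residuals $\bar r(\cdot):=\bar f(\cdot)-\bar a(\bar u^R,\cdot)$, $\bar r_{(1)}(\cdot):=-\bar l(\cdot)-\bar a(\cdot,\bar u^R_{(1)})$, $\bar r_{(2)}(\cdot):=-2E[l(\bar u^R)l(\cdot)]-\bar a(\cdot,\bar u^R_{(2)})$, $\bar r_{(3)}(\cdot):=-2\big(\bar l(\bar u^R)-\bar r(\bar u^R_{(1)})\big)\bar l(\cdot)-\bar a(\cdot,\bar u^R_{(3)})$. Then \[ \big|V[l(\bar u)]-V[l(\bar u^R)]-\bar r(\bar u^R_{(1)})^2+\bar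 r(\bar u^R_{(2)})-\bar r(\bar u^R_{(3)})\big| \le\frac{\bar\gamma_{(2)}\|\bar r\|_{\bar X'}^2}{\bar\alpha^2}+\frac{\|\bar r\|_{\bar X'}^2\|\bar r_{(1)}\|_{\bar X'}^2}{\bar\alpha^2}+\frac{\|\bar r_{(2)}-\bar r_{(3)}\|_{\bar X'}\|\bar r\|_{\bar X'}}{\bar\alpha}. \]
   Context: Random vector $\xi=(\xi_1,\dots,\xi_K)$ of independent real random variables with image $\Xi\subset\mathbb R^K$ and joint density $p_\xi$; $E[g]:=\int_\Xi g(y)p_\xi(y)\,dy$ and $V[g]:=E[(g-E[g])^2]$. $X$ is a real separable Hilbert space, $S\subset L^2_\xi(\Xi)$ a finite-dimensional subspace, and $\bar X:=S\otimes X$ with the norm of $L^2_\xi(\Xi;X)$, $\|v\|_{\bar X}^2=\int_\Xi\|v(y)\|_X^2p_\xi(y)dy$. For $(y,\mu)\in\Xi\times\mathcal P$, $a(\cdot,\cdot;y,\mu)$ is a bilinear form on $X$ bounded and coercive uniformly in $(y,\mu)$; $f(\cdot;y,\mu)$ and $l(\cdot;y,\mu)$ are linear forms on $X$ bounded uniformly in $(y,\mu)$ (measurable in $y$). For $w,v\in\bar X$ (suppressing $\mu$): $\bar a(w,v):=E[a(w(\cdot),v(\cdot);\cdot,\mu)]$, $\bar f(v):=E[f(v(\cdot);\cdot,\mu)]$, $\bar l(v):=E[l(v(\cdot);\cdot,\mu)]$, and $l(v)$ denotes the function $y\mapsto l(v(y);y,\mu)$, so e.g. $E[l(w)l(v)]=\int_\Xi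 l(w(y);y,\mu)l(v(y);y,\mu)p_\xi(y)dy$. Coercivity factor $\bar\alpha:=\inf_{v\in\bar X\setminus\{0\}}\bar a(v,v)/\|v\|_{\bar X}^2$; continuity factor $\bar\gamma_{(2)}:=\sup_{w,v\in\bar X\setminus\{0\}}E[l(w)l(v)]/(\|w\|_{\bar X}\|v\|_{\bar X})$. Dual norm $\|F\|_{\bar X'}:=\sup_{v\ne0}|F(v)|/\|v\|_{\bar X}$. *)

theory Defs
  imports "HOL-Analysis.Analysis"
begin

definition Ex :: "(real^'k::finite \<Rightarrow> real) \<Rightarrow> (real^'k) set \<Rightarrow> (real^'k \<Rightarrow> real) \<Rightarrow> real" where
  "Ex p Xi g = (LINT y:Xi|lborel. g y * p y)"

definition Var :: "(real^'k::finite \<Rightarrow> real) \<Rightarrow> (real^'k) set \<Rightarrow> (real^'k \<Rightarrow> real) \<Rightarrow> real" where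
  "Var p Xi g = Ex p Xi (\<lambda>y. (g y - Ex p Xi g)^2)"

definition normXb :: "(real^'k::finite \<Rightarrow> real) \<Rightarrow> (real^'k) set \<Rightarrow> (real^'k \<Rightarrow> 'x::real_normed_vector) \<Rightarrow> real" where
  "normXb p Xi v = sqrt (Ex p Xi (\<lambda>y. (norm (v y))^2))"

definition Sspace :: "nat \<Rightarrow> (nat \<Rightarrow> real^'k \<Rightarrow> real) \<Rightarrow> (real^'k \<Rightarrow> real) set" where
  "Sspace m b = {s. \<exists>c::nat \<Rightarrow> real. s = (\<lambda>y. \<Sum>i<m. c i * b i y)}"

text \<open>The tensor product space S \<otimes> X (algebraic = Hilbert tensor product, as S is
  finite dimensional): finite sums of s(y) x with s in S, x in X.\<close>
definition tensorSX :: "(real^'k \<Rightarrow> real) set \<Rightarrow> (real^'k \<Rightarrow> 'x::real_vector) set" where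
  "tensorSX S = {v. \<exists>(n::nat) (s::nat \<Rightarrow> real^'k \<Rightarrow> real) (x::nat \<Rightarrow> 'x).
       (\<forall>i<n. s i \<in> S) \<and> v = (\<lambda>y. \<Sum>i<n. s i y *\<^sub>R x i)}"

definition lin_subspace_of :: "('a \<Rightarrow> 'x::real_vector) set \<Rightarrow> ('a \<Rightarrow> 'x) set \<Rightarrow> bool" where
  "lin_subspace_of V W \<longleftrightarrow> V \<subseteq> W \<and> (\<lambda>y. 0) \<in> V \<and>
     (\<forall>v\<in>V. \<forall>w\<in>V. (\<lambda>y. v y + w y) \<in> V) \<and> (\<forall>c. \<forall>v\<in>V. (\<lambda>y. c *\<^sub>R v y) \<in> V)"

text \<open>Parametrized forms averaged over the randomness (mu fixed and suppressed).\<close>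
definition abar :: "(real^'k::finite \<Rightarrow> real) \<Rightarrow> (real^'k) set \<Rightarrow> ('x \<Rightarrow> 'x \<Rightarrow> real^'k \<Rightarrow> real)
    \<Rightarrow> (real^'k \<Rightarrow> 'x) \<Rightarrow> (real^'k \<Rightarrow> 'x) \<Rightarrow> real" where
  "abar p Xi a w v = Ex p Xi (\<lambda>y. a (w y) (v y) y)"

definition fbar :: "(real^'k::finite \<Rightarrow> real) \<Rightarrow> (real^'k) set \<Rightarrow> ('x \<Rightarrow> real^'k \<Rightarrow> real)
    \<Rightarrow> (real^'k \<Rightarrow> 'x) \<Rightarrow> real" where
  "fbar p Xi f v = Ex p Xi (\<lambda>y. f (v y) y)"

definition Ell :: "(real^'k::finite \<Rightarrow> real) \<Rightarrow> (real^'k) set \<Rightarrow> ('x \<Rightarrow> real^'k \<Rightarrow> real)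
    \<Rightarrow> (real^'k \<Rightarrow> 'x) \<Rightarrow> (real^'k \<Rightarrow> 'x) \<Rightarrow> real" where
  "Ell p Xi l w v = Ex p Xi (\<lambda>y. l (w y) y * l (v y) y)"

text \<open>Coercivity factor: infimum over the nonzero elements of Xbar (elements of
  L^2 norm zero are the zero class).\<close>
definition alpha_bar :: "(real^'k::finite \<Rightarrow> real) \<Rightarrow> (real^'k) set \<Rightarrow> (real^'k \<Rightarrow> 'x::real_normed_vector) set
    \<Rightarrow> ('x \<Rightarrow> 'x \<Rightarrow> real^'k \<Rightarrow> real) \<Rightarrow> real" where
  "alpha_bar p Xi Xb a = (INF v\<in>{v\<in>Xb. normXb p Xi v \<noteq> 0}. abar p Xi a v v / (normXb p Xi v)^2)"

definition gamma2_bar :: "(real^'k::finite \<Rightarrow> real) \<Rightarrow> (real^'k) set \<Rightarrow> (real^'k \<Rightarrow> 'x::real_normed_vector) set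
    \<Rightarrow> ('x \<Rightarrow> real^'k \<Rightarrow> real) \<Rightarrow> real" where
  "gamma2_bar p Xi Xb l = (SUP wv\<in>{v\<in>Xb. normXb p Xi v \<noteq> 0} \<times> {v\<in>Xb. normXb p Xi v \<noteq> 0}.
      Ell p Xi l (fst wv) (snd wv) / (normXb p Xi (fst wv) * normXb p Xi (snd wv)))"

text \<open>Dual norm on Xbar' (the 0 is inserted only so that the degenerate case
  Xbar = {0} gives 0; all quotients are nonnegative anyway).\<close>
definition dual_norm :: "(real^'k::finite \<Rightarrow> real) \<Rightarrow> (real^'k) set \<Rightarrow> (real^'k \<Rightarrow> 'x::real_normed_vector) set
    \<Rightarrow> ((real^'k \<Rightarrow> 'x) \<Rightarrow> real) \<Rightarrow> real" where
  "dual_norm p Xi Xb F = Sup (insert 0 ((\<lambda>v. \<bar>F v\<bar> / normXb p Xi v) ` {v\<in>Xb. normXb p Xi v \<noteq> 0}))"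

end

theory Submission
  imports Defs
begin

text \<open>With \<open>e = u - uR\<close> the residual is \<open>r(v) = abar(e, v)\<close> on \<open>Xbar\<close>. Expanding
  \<open>V[l(uR + e)]\<close> shows that the left-hand side equals \<open>E[l(e)\<^sup>2] - r1(e)\<^sup>2 - (r2(e) - r3(e))\<close>:
  the right-hand sides of the three dual problems are chosen exactly so that they cancel all terms
  of the expansion that are linear in \<open>e\<close>. These three quantities are bounded by
  \<open>gamma \<parallel>e\<parallel>\<^sup>2\<close>, \<open>\<parallel>r1\<parallel>\<^sup>2 \<parallel>e\<parallel>\<^sup>2\<close> and \<open>\<parallel>r2 - r3\<parallel> \<parallel>e\<parallel>\<close>, and coercivity gives
  \<open>alpha \<parallel>e\<parallel>\<^sup>2 \<le> abar(e, e) = r(e) \<le> \<parallel>r\<parallel> \<parallel>e\<parallel>\<close>. All expectations are finite because every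
  element of \<open>Xbar\<close> is a finite expansion in the square-integrable basis functions of \<open>S\<close>.\<close>

section \<open>Expectations\<close>

definition Ex_integrable :: "(real^'k::finite \<Rightarrow> real) \<Rightarrow> (real^'k) set \<Rightarrow> (real^'k \<Rightarrow> real) \<Rightarrow> bool"
  where "Ex_integrable p Xi g \<longleftrightarrow> set_integrable lborel Xi (\<lambda>y. g y * p y)"

lemma Ex_integrable_add:
  "Ex_integrable p Xi g \<Longrightarrow> Ex_integrable p Xi h \<Longrightarrow> Ex_integrable p Xi (\<lambda>y. g y + h y)"
  unfolding Ex_integrable_def by (simp add: distrib_right)

lemma Ex_add:
  "Ex_integrable p Xi g \<Longrightarrow> Ex_integrable p Xi h \<Longrightarrow> Ex p Xi (\<lambda>y. g y + h y) = Ex p Xi g + Ex p Xi h"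
  unfolding Ex_integrable_def Ex_def by (simp add: distrib_right)

lemma Ex_integrable_diff:
  "Ex_integrable p Xi g \<Longrightarrow> Ex_integrable p Xi h \<Longrightarrow> Ex_integrable p Xi (\<lambda>y. g y - h y)"
  unfolding Ex_integrable_def by (simp add: left_diff_distrib)

lemma Ex_diff:
  "Ex_integrable p Xi g \<Longrightarrow> Ex_integrable p Xi h \<Longrightarrow> Ex p Xi (\<lambda>y. g y - h y) = Ex p Xi g - Ex p Xi h"
  unfolding Ex_integrable_def Ex_def by (simp add: left_diff_distrib)

lemma Ex_integrable_cmult: "Ex_integrable p Xi g \<Longrightarrow> Ex_integrable p Xi (\<lambda>y. c * g y)"
  unfolding Ex_integrable_def by (simp add: mult.assoc)

lemma Ex_cmult: "Ex p Xi (\<lambda>y. c * g y) = c * Ex p Xi g"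
  unfolding Ex_def by (simp add: mult.assoc)

lemma Ex_integrable_sum:
  "finite I \<Longrightarrow> (\<And>i. i \<in> I \<Longrightarrow> Ex_integrable p Xi (g i)) \<Longrightarrow> Ex_integrable p Xi (\<lambda>y. \<Sum>i\<in>I. g i y)"
proof (induction I rule: finite_induct)
  case empty
  then show ?case by (simp add: Ex_integrable_def set_integrable_def)
next
  case (insert i I)
  then show ?case by (simp add: Ex_integrable_add)
qed

lemma Ex_integrable_cong:
  "Xi \<in> sets lborel \<Longrightarrow> (\<And>y. y \<in> Xi \<Longrightarrow> g y = h y) \<Longrightarrow> Ex_integrable p Xi g = Ex_integrable p Xi h"
  unfolding Ex_integrable_def by (rule set_integrable_cong) auto

lemma Ex_cong: "Xi \<in> sets lborel \<Longrightarrow> (\<And>y. y \<in> Xi \<Longrightarrow> g y = h y) \<Longrightarrow> Ex p Xi g = Ex p Xi h"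
  unfolding Ex_def by (rule set_lebesgue_integral_cong) auto

lemma le_sqrt_mult_if_le_AM:
  fixes x A B :: real
  assumes AM: "\<And>t. t > 0 \<Longrightarrow> 2 * x \<le> t * A + B / t" and "A \<ge> 0" "B \<ge> 0"
  shows "x \<le> sqrt (A * B)"
proof (cases "x \<le> 0")
  case True
  then show ?thesis using assms by (meson order_trans real_sqrt_ge_zero zero_le_mult_iff)
next
  case False
  show ?thesis
  proof (cases "A = 0")
    case True
    have "2 * x \<le> B / ((B + 1) / x)" using AM[of "(B + 1) / x"] False True \<open>B \<ge> 0\<close> by simp
    then have "B * x + 2 * x \<le> 0" using False \<open>B \<ge> 0\<close> by (simp add: field_simps)
    moreover have "0 \<le> B * x" using False \<open>B \<ge> 0\<close> by simp
    ultimately show ?thesis using False by linarith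
  next
    case A: False
    have "2 * x \<le> x / A * A + B / (x / A)" using AM[of "x / A"] False A \<open>A \<ge> 0\<close> by simp
    then have "x\<^sup>2 \<le> A * B" using False A by (simp add: field_simps power2_eq_square)
    then show ?thesis by (rule real_le_rsqrt)
  qed
qed

locale probability_density =
  fixes p :: "real^'k::finite \<Rightarrow> real" and Xi :: "(real^'k) set"
  assumes Xi_meas[measurable]: "Xi \<in> sets lborel"
    and p_meas[measurable]: "p \<in> borel_measurable borel"
    and p_nonneg: "\<forall>y. 0 \<le> p y"
    and p_int: "set_integrable lborel Xi p"
    and p_prob: "(LINT y:Xi|lborel. p y) = 1"
begin

lemma Ex_integrable_const: "Ex_integrable p Xi (\<lambda>y. c)"
  using p_int by (simp add: Ex_integrable_def)

lemma Ex_const: "Ex p Xi (\<lambda>y. c) = c"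
  using Ex_cmult[of p Xi c "\<lambda>y. 1"] p_prob by (simp add: Ex_def)

lemma Ex_nonneg: "(\<And>y. y \<in> Xi \<Longrightarrow> 0 \<le> g y) \<Longrightarrow> 0 \<le> Ex p Xi g"
  unfolding Ex_def set_lebesgue_integral_def using p_nonneg
  by (intro Bochner_Integration.integral_nonneg) (auto simp: indicator_def)

lemma Ex_mono:
  "Ex_integrable p Xi g \<Longrightarrow> Ex_integrable p Xi h \<Longrightarrow> (\<And>y. y \<in> Xi \<Longrightarrow> g y \<le> h y)
    \<Longrightarrow> Ex p Xi g \<le> Ex p Xi h"
  unfolding Ex_def Ex_integrable_def using p_nonneg
  by (intro set_integral_mono) (auto intro: mult_right_mono)

lemma Ex_integrable_abs: "Ex_integrable p Xi g \<Longrightarrow> Ex_integrable p Xi (\<lambda>y. \<bar>g y\<bar>)"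
  unfolding Ex_integrable_def using set_integrable_abs[of lborel Xi "\<lambda>y. g y * p y"] p_nonneg
  by (simp add: abs_mult)

lemma abs_Ex_le: "Ex_integrable p Xi g \<Longrightarrow> \<bar>Ex p Xi g\<bar> \<le> Ex p Xi (\<lambda>y. \<bar>g y\<bar>)"
proof -
  assume g: "Ex_integrable p Xi g"
  have "Ex p Xi g \<le> Ex p Xi (\<lambda>y. \<bar>g y\<bar>)"
    using g by (intro Ex_mono) (auto simp: Ex_integrable_abs)
  moreover have "Ex p Xi (\<lambda>y. (- 1) * g y) \<le> Ex p Xi (\<lambda>y. \<bar>g y\<bar>)"
    by (rule Ex_mono[OF Ex_integrable_cmult[OF g] Ex_integrable_abs[OF g]]) simp
  ultimately show ?thesis unfolding Ex_cmult by linarith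
qed

lemma Ex_Cauchy_Schwarz:
  assumes g: "Ex_integrable p Xi g"
    and \<phi>: "Ex_integrable p Xi (\<lambda>y. (\<phi> y)\<^sup>2)" and \<psi>: "Ex_integrable p Xi (\<lambda>y. (\<psi> y)\<^sup>2)"
    and bound: "\<And>y. y \<in> Xi \<Longrightarrow> \<bar>g y\<bar> \<le> K * \<phi> y * \<psi> y"
    and nonneg: "\<And>y. y \<in> Xi \<Longrightarrow> 0 \<le> \<phi> y" "\<And>y. y \<in> Xi \<Longrightarrow> 0 \<le> \<psi> y" "0 \<le> K"
  shows "\<bar>Ex p Xi g\<bar> \<le> K * sqrt (Ex p Xi (\<lambda>y. (\<phi> y)\<^sup>2)) * sqrt (Ex p Xi (\<lambda>y. (\<psi> y)\<^sup>2))"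
proof -
  define A where "A = Ex p Xi (\<lambda>y. (\<phi> y)\<^sup>2)"
  define B where "B = Ex p Xi (\<lambda>y. (\<psi> y)\<^sup>2)"
  have "0 \<le> A" "0 \<le> B" unfolding A_def B_def by (auto intro: Ex_nonneg)
  have "2 * \<bar>Ex p Xi g\<bar> \<le> t * (K * A) + K * B / t" if t: "t > 0" for t
  proof -
    have "\<bar>g y\<bar> \<le> (t * K / 2) * (\<phi> y)\<^sup>2 + (K / (2 * t)) * (\<psi> y)\<^sup>2" if y: "y \<in> Xi" for y
    proof -
      \<comment> \<open>weighted AM-GM: \<open>2 \<phi> \<psi> \<le> t \<phi>\<^sup>2 + \<psi>\<^sup>2 / t\<close>\<close>
      have "2 * t * (\<phi> y * \<psi> y) \<le> (t * \<phi> y)\<^sup>2 + (\<psi> y)\<^sup>2"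
        using zero_le_power2[of "t * \<phi> y - \<psi> y"] by (simp add: power2_eq_square algebra_simps)
      then have "K * (\<phi> y * \<psi> y) \<le> K * ((t / 2) * (\<phi> y)\<^sup>2 + (1 / (2 * t)) * (\<psi> y)\<^sup>2)"
        using t nonneg(3) by (intro mult_left_mono) (simp_all add: field_simps power2_eq_square)
      then show ?thesis using bound[OF y] by (simp add: algebra_simps)
    qed
    then have "Ex p Xi (\<lambda>y. \<bar>g y\<bar>) \<le> Ex p Xi (\<lambda>y. (t * K / 2) * (\<phi> y)\<^sup>2 + (K / (2 * t)) * (\<psi> y)\<^sup>2)"
      using g \<phi> \<psi> by (intro Ex_mono Ex_integrable_abs Ex_integrable_add Ex_integrable_cmult)
    also have "\<dots> = (t * K / 2) * A + (K / (2 * t)) * B"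
      unfolding A_def B_def Ex_add[OF Ex_integrable_cmult[OF \<phi>] Ex_integrable_cmult[OF \<psi>]] Ex_cmult ..
    finally have "\<bar>Ex p Xi g\<bar> \<le> (t * K / 2) * A + (K / (2 * t)) * B"
      using abs_Ex_le[OF g] by linarith
    then show ?thesis using t by (simp add: field_simps)
  qed
  then have "\<bar>Ex p Xi g\<bar> \<le> sqrt ((K * A) * (K * B))"
    using \<open>0 \<le> A\<close> \<open>0 \<le> B\<close> nonneg(3) by (intro le_sqrt_mult_if_le_AM) auto
  also have "\<dots> = K * sqrt A * sqrt B"
    using nonneg(3) by (simp add: real_sqrt_mult power2_eq_square[symmetric] mult_ac)
  finally show ?thesis unfolding A_def B_def .
qed

lemma Var_eq:
  assumes "Ex_integrable p Xi g" "Ex_integrable p Xi (\<lambda>y. g y * g y)"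
  shows "Var p Xi g = Ex p Xi (\<lambda>y. g y * g y) - (Ex p Xi g)\<^sup>2"
proof -
  define c where "c = Ex p Xi g"
  have "Var p Xi g = Ex p Xi (\<lambda>y. (g y * g y - 2 * c * g y) + c\<^sup>2)"
    unfolding Var_def c_def[symmetric]
    by (rule Ex_cong[OF Xi_meas]) (simp add: power2_eq_square algebra_simps)
  also have "\<dots> = Ex p Xi (\<lambda>y. g y * g y - 2 * c * g y) + c\<^sup>2"
    using assms by (subst Ex_add) (auto intro: Ex_integrable_diff Ex_integrable_cmult Ex_integrable_const simp: Ex_const)
  also have "Ex p Xi (\<lambda>y. g y * g y - 2 * c * g y) = Ex p Xi (\<lambda>y. g y * g y) - 2 * c * c"
    using assms by (subst Ex_diff) (auto intro: Ex_integrable_cmult simp: Ex_cmult c_def)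
  finally show ?thesis by (simp add: c_def power2_eq_square)
qed

lemma Var_cong:
  assumes "\<And>y. y \<in> Xi \<Longrightarrow> g y = h y"
  shows "Var p Xi g = Var p Xi h"
proof -
  have "Ex p Xi g = Ex p Xi h" by (rule Ex_cong[OF Xi_meas assms])
  then show ?thesis unfolding Var_def by (auto intro: Ex_cong[OF Xi_meas] simp: assms)
qed

lemma Var_add:
  assumes "Ex_integrable p Xi g" "Ex_integrable p Xi h" "Ex_integrable p Xi (\<lambda>y. g y * g y)"
    "Ex_integrable p Xi (\<lambda>y. g y * h y)" "Ex_integrable p Xi (\<lambda>y. h y * h y)"
  shows "Var p Xi (\<lambda>y. g y + h y) = Var p Xi g + Ex p Xi (\<lambda>y. h y * h y)
    + 2 * Ex p Xi (\<lambda>y. g y * h y) - (Ex p Xi h)\<^sup>2 - 2 * Ex p Xi g * Ex p Xi h"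
proof -
  have sq: "(\<lambda>y. (g y + h y) * (g y + h y)) = (\<lambda>y. g y * g y + (2 * (g y * h y) + h y * h y))"
    by (simp add: fun_eq_iff algebra_simps)
  have "Ex p Xi (\<lambda>y. (g y + h y) * (g y + h y))
      = Ex p Xi (\<lambda>y. g y * g y) + 2 * Ex p Xi (\<lambda>y. g y * h y) + Ex p Xi (\<lambda>y. h y * h y)"
    unfolding sq using assms by (simp add: Ex_add Ex_integrable_add Ex_integrable_cmult Ex_cmult)
  moreover have "Var p Xi (\<lambda>y. g y + h y) = Ex p Xi (\<lambda>y. (g y + h y) * (g y + h y)) - (Ex p Xi (\<lambda>y. g y + h y))\<^sup>2"
  proof (rule Var_eq)
    show "Ex_integrable p Xi (\<lambda>y. g y + h y)" using assms(1,2) by (rule Ex_integrable_add)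
    show "Ex_integrable p Xi (\<lambda>y. (g y + h y) * (g y + h y))"
      unfolding sq using assms by (intro Ex_integrable_add Ex_integrable_cmult)
  qed
  ultimately show ?thesis
    using assms by (simp add: Var_eq Ex_add power2_eq_square algebra_simps)
qed

end

section \<open>Dual norm, coercivity and continuity factors\<close>

definition dual_bounded :: "(real^'k::finite \<Rightarrow> real) \<Rightarrow> (real^'k) set \<Rightarrow> (real^'k \<Rightarrow> 'x::real_normed_vector) set
    \<Rightarrow> ((real^'k \<Rightarrow> 'x) \<Rightarrow> real) \<Rightarrow> bool"
  where "dual_bounded p Xi Xb F \<longleftrightarrow> (\<exists>K. \<forall>v\<in>Xb. \<bar>F v\<bar> \<le> K * normXb p Xi v)"

lemma dual_boundedI: "(\<And>v. v \<in> Xb \<Longrightarrow> \<bar>F v\<bar> \<le> K * normXb p Xi v) \<Longrightarrow> dual_bounded p Xi Xb F"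
  unfolding dual_bounded_def by blast

lemma dual_bounded_add:
  assumes "dual_bounded p Xi Xb F" "dual_bounded p Xi Xb G"
  shows "dual_bounded p Xi Xb (\<lambda>v. F v + G v)"
proof -
  obtain K L where "\<forall>v\<in>Xb. \<bar>F v\<bar> \<le> K * normXb p Xi v" "\<forall>v\<in>Xb. \<bar>G v\<bar> \<le> L * normXb p Xi v"
    using assms unfolding dual_bounded_def by blast
  then show ?thesis by (intro dual_boundedI[where K="K + L"]) (fastforce simp: distrib_right)
qed

lemma dual_bounded_cmult:
  assumes "dual_bounded p Xi Xb F"
  shows "dual_bounded p Xi Xb (\<lambda>v. c * F v)"
proof -
  obtain K where "\<forall>v\<in>Xb. \<bar>F v\<bar> \<le> K * normXb p Xi v"
    using assms unfolding dual_bounded_def by blast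
  then show ?thesis
    by (intro dual_boundedI[where K="\<bar>c\<bar> * K"]) (auto simp: abs_mult mult.assoc intro: mult_left_mono)
qed

lemma dual_bounded_uminus: "dual_bounded p Xi Xb F \<Longrightarrow> dual_bounded p Xi Xb (\<lambda>v. - F v)"
  using dual_bounded_cmult[of p Xi Xb F "-1"] by simp

lemma dual_bounded_diff:
  "dual_bounded p Xi Xb F \<Longrightarrow> dual_bounded p Xi Xb G \<Longrightarrow> dual_bounded p Xi Xb (\<lambda>v. F v - G v)"
  using dual_bounded_add[of p Xi Xb F "\<lambda>v. - G v"] dual_bounded_uminus by fastforce

lemma dual_bounded_cong:
  "(\<And>v. v \<in> Xb \<Longrightarrow> F v = G v) \<Longrightarrow> dual_bounded p Xi Xb F \<longleftrightarrow> dual_bounded p Xi Xb G"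
  unfolding dual_bounded_def by simp

lemma dual_norm_eq_0:
  "(\<And>v. v \<in> Xb \<Longrightarrow> normXb p Xi v = 0) \<Longrightarrow> dual_norm p Xi Xb F = 0"
proof -
  assume "\<And>v. v \<in> Xb \<Longrightarrow> normXb p Xi v = 0"
  then have empty: "{v \<in> Xb. normXb p Xi v \<noteq> 0} = {}" by blast
  show ?thesis unfolding dual_norm_def empty by simp
qed

context probability_density
begin

lemma normXb_nonneg: "0 \<le> normXb p Xi v"
  unfolding normXb_def by (auto intro: Ex_nonneg)

lemma normXb_sq: "(normXb p Xi v)\<^sup>2 = Ex p Xi (\<lambda>y. (norm (v y))\<^sup>2)"
  unfolding normXb_def by (auto intro: Ex_nonneg)

lemma Ell_self_nonneg: "0 \<le> Ell p Xi l v v"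
  unfolding Ell_def by (rule Ex_nonneg) simp

lemma bdd_above_dual_quotients:
  assumes "dual_bounded p Xi Xb F"
  shows "bdd_above (insert 0 ((\<lambda>v. \<bar>F v\<bar> / normXb p Xi v) ` {v\<in>Xb. normXb p Xi v \<noteq> 0}))"
proof -
  obtain K where K: "\<forall>v\<in>Xb. \<bar>F v\<bar> \<le> K * normXb p Xi v"
    using assms unfolding dual_bounded_def by blast
  have "\<bar>F v\<bar> / normXb p Xi v \<le> max K 0" if "v \<in> Xb" "normXb p Xi v \<noteq> 0" for v
  proof -
    have "0 < normXb p Xi v" using that normXb_nonneg[of v] by linarith
    then show ?thesis using K that by (simp add: divide_le_eq) (smt (verit) mult_right_mono)
  qed
  then show ?thesis by (intro bdd_aboveI[where M="max K 0"]) auto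
qed

lemma dual_norm_nonneg: "dual_bounded p Xi Xb F \<Longrightarrow> 0 \<le> dual_norm p Xi Xb F"
  unfolding dual_norm_def by (rule cSup_upper[OF _ bdd_above_dual_quotients]) simp_all

lemma abs_le_dual_norm:
  assumes "dual_bounded p Xi Xb F" "v \<in> Xb"
  shows "\<bar>F v\<bar> \<le> dual_norm p Xi Xb F * normXb p Xi v"
proof (cases "normXb p Xi v = 0")
  case True
  then show ?thesis using assms unfolding dual_bounded_def by force
next
  case False
  then have "0 < normXb p Xi v" using normXb_nonneg[of v] by linarith
  moreover have "\<bar>F v\<bar> / normXb p Xi v \<le> dual_norm p Xi Xb F"
    unfolding dual_norm_def using assms False
    by (intro cSup_upper[OF _ bdd_above_dual_quotients]) auto
  ultimately show ?thesis by (simp add: divide_le_eq)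
qed

lemma Ell_le_gamma2_bar:
  assumes bounded: "\<forall>w\<in>Xb. \<forall>v\<in>Xb. \<bar>Ell p Xi l w v\<bar> \<le> K * normXb p Xi w * normXb p Xi v"
    and e: "e \<in> Xb"
  shows "Ell p Xi l e e \<le> gamma2_bar p Xi Xb l * (normXb p Xi e)\<^sup>2"
proof (cases "normXb p Xi e = 0")
  case True
  then show ?thesis using bounded e by force
next
  case False
  let ?T = "{v\<in>Xb. normXb p Xi v \<noteq> 0}"
  let ?q = "\<lambda>wv. Ell p Xi l (fst wv) (snd wv) / (normXb p Xi (fst wv) * normXb p Xi (snd wv))"
  have "?q wv \<le> K" if "wv \<in> ?T \<times> ?T" for wv
  proof -
    have "0 < normXb p Xi (fst wv) * normXb p Xi (snd wv)"
      using that normXb_nonneg[of "fst wv"] normXb_nonneg[of "snd wv"] by (auto intro: mult_pos_pos)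
    moreover have "Ell p Xi l (fst wv) (snd wv) \<le> K * (normXb p Xi (fst wv) * normXb p Xi (snd wv))"
      using bounded that by (force simp: mult.assoc dest: abs_le_D1)
    ultimately show ?thesis by (simp add: divide_le_eq)
  qed
  then have "?q (e, e) \<le> gamma2_bar p Xi Xb l"
    unfolding gamma2_bar_def using e False by (intro cSUP_upper bdd_aboveI2) auto
  moreover have "0 < normXb p Xi e" using False normXb_nonneg[of e] by linarith
  ultimately show ?thesis by (simp add: divide_le_eq power2_eq_square)
qed

lemma gamma2_bar_nonneg:
  assumes "\<forall>w\<in>Xb. \<forall>v\<in>Xb. \<bar>Ell p Xi l w v\<bar> \<le> K * normXb p Xi w * normXb p Xi v"
    and "v \<in> Xb" "normXb p Xi v \<noteq> 0"
  shows "0 \<le> gamma2_bar p Xi Xb l"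
proof -
  have "0 \<le> gamma2_bar p Xi Xb l * (normXb p Xi v)\<^sup>2"
    using Ell_le_gamma2_bar[OF assms(1,2)] Ell_self_nonneg[of l v] by linarith
  then show ?thesis using assms(3) by (simp add: zero_le_mult_iff)
qed

lemma alpha_bar_ge:
  assumes "\<forall>v\<in>Xb. c * (normXb p Xi v)\<^sup>2 \<le> abar p Xi a v v"
    and "v \<in> Xb" "normXb p Xi v \<noteq> 0"
  shows "c \<le> alpha_bar p Xi Xb a"
  unfolding alpha_bar_def using assms by (intro cINF_greatest) (auto simp: le_divide_eq)

lemma alpha_bar_norm_sq_le:
  assumes coercive: "\<forall>v\<in>Xb. c * (normXb p Xi v)\<^sup>2 \<le> abar p Xi a v v" and e: "e \<in> Xb"
  shows "alpha_bar p Xi Xb a * (normXb p Xi e)\<^sup>2 \<le> abar p Xi a e e"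
proof (cases "normXb p Xi e = 0")
  case True
  then show ?thesis using coercive e by force
next
  case False
  have "alpha_bar p Xi Xb a \<le> abar p Xi a e e / (normXb p Xi e)\<^sup>2"
    unfolding alpha_bar_def using coercive e False
    by (intro cINF_lower bdd_belowI2[where m=c]) (auto simp: le_divide_eq)
  then show ?thesis using False by (simp add: le_divide_eq)
qed

end

section \<open>The tensor product space and random forms on it\<close>

definition basis_expansion :: "nat \<Rightarrow> (nat \<Rightarrow> real^'k::finite \<Rightarrow> real) \<Rightarrow> (nat \<Rightarrow> 'x::real_vector) \<Rightarrow> real^'k \<Rightarrow> 'x"
  where "basis_expansion m b z = (\<lambda>y. \<Sum>j<m. b j y *\<^sub>R z j)"

lemma basis_in_Sspace:
  assumes "i < m"
  shows "b i \<in> Sspace m b"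
proof -
  have "(\<lambda>y. \<Sum>j<m. (if j = i then 1 else 0) * b j y) = (\<lambda>y. \<Sum>j<m. if j = i then b j y else 0)"
    by (intro ext sum.cong) auto
  then have "b i = (\<lambda>y. \<Sum>j<m. (if j = i then 1 else 0) * b j y)"
    using assms by simp
  then show ?thesis unfolding Sspace_def mem_Collect_eq by (rule exI[where x="\<lambda>j. if j = i then 1 else 0"])
qed

lemma tensorSX_Sspace_eq:
  fixes b :: "nat \<Rightarrow> real^'k::finite \<Rightarrow> real"
  shows "(tensorSX (Sspace m b) :: (real^'k \<Rightarrow> 'x::real_vector) set) = range (basis_expansion m b)"
proof safe
  fix v :: "real^'k \<Rightarrow> 'x"
  assume "v \<in> tensorSX (Sspace m b)"
  then obtain n :: nat and s x where s: "\<forall>i<n. s i \<in> Sspace m b" and v: "v = (\<lambda>y. \<Sum>i<n. s i y *\<^sub>R x i)"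
    unfolding tensorSX_def mem_Collect_eq by blast
  obtain C where C: "\<forall>i<n. s i = (\<lambda>y. \<Sum>j<m. C i j * b j y)"
    using s unfolding Sspace_def mem_Collect_eq by metis
  have "v y = basis_expansion m b (\<lambda>j. \<Sum>i<n. C i j *\<^sub>R x i) y" for y
  proof -
    have "v y = (\<Sum>i<n. (\<Sum>j<m. C i j * b j y) *\<^sub>R x i)" using v C by simp
    also have "\<dots> = (\<Sum>i<n. \<Sum>j<m. b j y *\<^sub>R (C i j *\<^sub>R x i))"
      by (simp add: scaleR_sum_left mult.commute)
    also have "\<dots> = basis_expansion m b (\<lambda>j. \<Sum>i<n. C i j *\<^sub>R x i) y"
      unfolding basis_expansion_def by (subst sum.swap) (simp add: scaleR_sum_right)
    finally show ?thesis .
  qed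
  then show "v \<in> range (basis_expansion m b)" by blast
next
  fix z :: "nat \<Rightarrow> 'x"
  show "basis_expansion m b z \<in> tensorSX (Sspace m b)"
    unfolding tensorSX_def basis_expansion_def mem_Collect_eq
    by (intro exI[of _ m] exI[of _ b] exI[of _ z] conjI) (auto intro: basis_in_Sspace)
qed

lemma tensorSX_Sspace_diff:
  assumes "w \<in> tensorSX (Sspace m b)" "v \<in> tensorSX (Sspace m b)"
  shows "(\<lambda>y. w y - v y) \<in> tensorSX (Sspace m b)"
proof -
  obtain z z' where "w = basis_expansion m b z" "v = basis_expansion m b z'"
    using assms unfolding tensorSX_Sspace_eq by blast
  then have "(\<lambda>y. w y - v y) = basis_expansion m b (\<lambda>j. z j - z' j)"
    by (simp add: basis_expansion_def fun_eq_iff sum_subtractf scaleR_diff_right)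
  then show ?thesis unfolding tensorSX_Sspace_eq by simp
qed

definition random_bilinear :: "(real^'k::finite) set \<Rightarrow> ('x::real_normed_vector \<Rightarrow> 'z::real_normed_vector \<Rightarrow> real^'k \<Rightarrow> real) \<Rightarrow> bool"
  where "random_bilinear Xi B \<longleftrightarrow> (\<forall>y\<in>Xi. bounded_bilinear (\<lambda>x z. B x z y)) \<and>
    (\<forall>x z. set_borel_measurable lborel Xi (\<lambda>y. B x z y)) \<and>
    (\<exists>C. \<forall>y\<in>Xi. \<forall>x z. \<bar>B x z y\<bar> \<le> C * norm x * norm z)"

definition random_linear :: "(real^'k::finite) set \<Rightarrow> ('x::real_normed_vector \<Rightarrow> real^'k \<Rightarrow> real) \<Rightarrow> bool"
  where "random_linear Xi F \<longleftrightarrow> (\<forall>y\<in>Xi. bounded_linear (\<lambda>x. F x y)) \<and>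
    (\<forall>x. set_borel_measurable lborel Xi (\<lambda>y. F x y)) \<and>
    (\<exists>C. \<forall>y\<in>Xi. \<forall>x. \<bar>F x y\<bar> \<le> C * norm x)"

lemma random_bilinear_product:
  assumes "random_linear Xi F" "random_linear Xi G"
  shows "random_bilinear Xi (\<lambda>x z y. F x y * G z y)"
proof -
  obtain C D where C: "\<forall>y\<in>Xi. \<forall>x. \<bar>F x y\<bar> \<le> C * norm x" and D: "\<forall>y\<in>Xi. \<forall>x. \<bar>G x y\<bar> \<le> D * norm x"
    using assms unfolding random_linear_def by blast
  have "\<bar>F x y * G z y\<bar> \<le> (C * D) * norm x * norm z" if "y \<in> Xi" for x z y
  proof -
    have "\<bar>F x y\<bar> \<le> C * norm x" "\<bar>G z y\<bar> \<le> D * norm z" using C D that by auto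
    then have "\<bar>F x y\<bar> * \<bar>G z y\<bar> \<le> (C * norm x) * (D * norm z)"
      by (intro mult_mono) auto
    then show ?thesis by (simp add: abs_mult mult_ac)
  qed
  moreover have "set_borel_measurable lborel Xi (\<lambda>y. F x y * G z y)" for x z
  proof -
    have "(\<lambda>y. indicator Xi y *\<^sub>R (F x y * G z y)) = (\<lambda>y. (indicator Xi y *\<^sub>R F x y) * (indicator Xi y *\<^sub>R G z y))"
      by (auto simp: fun_eq_iff indicator_def)
    moreover have "(\<lambda>y. (indicator Xi y *\<^sub>R F x y) * (indicator Xi y *\<^sub>R G z y)) \<in> borel_measurable lborel"
      using assms unfolding random_linear_def set_borel_measurable_def
      by (intro borel_measurable_times) auto
    ultimately show ?thesis unfolding set_borel_measurable_def by simp
  qed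
  moreover have "bounded_bilinear (\<lambda>x z. F x y * G z y)" if "y \<in> Xi" for y
    using assms that unfolding random_linear_def
    by (intro bounded_bilinear.comp[OF bounded_bilinear_mult]) auto
  ultimately show ?thesis unfolding random_bilinear_def by blast
qed

lemma random_bilinear_inner:
  assumes [measurable]: "Xi \<in> sets lborel"
  shows "random_bilinear Xi (\<lambda>(x::'x::real_inner) z (y::real^'k::finite). inner x z)"
proof -
  have "set_borel_measurable lborel Xi (\<lambda>y. inner x z :: real)" for x z :: 'x
    unfolding set_borel_measurable_def by measurable
  moreover have "\<forall>y\<in>Xi. \<forall>x z::'x. \<bar>inner x z\<bar> \<le> 1 * norm x * norm z"
    by (simp add: Cauchy_Schwarz_ineq2)
  ultimately show ?thesis unfolding random_bilinear_def using bounded_bilinear_inner by blast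
qed

lemma variance_estimate_arith:
  fixes n E \<rho>1 \<rho>23 \<alpha> \<gamma> R R1 R23 :: real
  assumes "0 \<le> n" "0 \<le> E" "E \<le> \<gamma> * n\<^sup>2" "\<bar>\<rho>1\<bar> \<le> R1 * n" "\<bar>\<rho>23\<bar> \<le> R23 * n"
    and "\<alpha> * n\<^sup>2 \<le> R * n" "0 \<le> R" "0 \<le> R23"
    and "0 < \<alpha> \<and> 0 \<le> \<gamma> \<or> R = 0 \<and> n = 0"
  shows "\<bar>E - \<rho>1\<^sup>2 - \<rho>23\<bar> \<le> \<gamma> * R\<^sup>2 / \<alpha>\<^sup>2 + R\<^sup>2 * R1\<^sup>2 / \<alpha>\<^sup>2 + R23 * R / \<alpha>"
proof -
  have \<rho>1: "\<rho>1\<^sup>2 \<le> R1\<^sup>2 * n\<^sup>2"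
    using power_mono[OF assms(4) abs_ge_zero, of 2] by (simp add: power_mult_distrib)
  have lhs: "\<bar>E - \<rho>1\<^sup>2 - \<rho>23\<bar> \<le> \<gamma> * n\<^sup>2 + R1\<^sup>2 * n\<^sup>2 + R23 * n"
    using assms(2,3,5) \<rho>1 zero_le_power2[of \<rho>1] by linarith
  consider "0 < \<alpha>" "0 \<le> \<gamma>" | "R = 0" "n = 0" using assms(9) by blast
  then show ?thesis
  proof cases
    case 1
    have "\<alpha> * n \<le> R"
      using assms(1,6,7) \<open>0 < \<alpha>\<close> by (cases "n = 0") (auto simp: power2_eq_square)
    then have n: "n \<le> R / \<alpha>" using \<open>0 < \<alpha>\<close> by (simp add: field_simps)
    have "\<gamma> * n\<^sup>2 + R1\<^sup>2 * n\<^sup>2 + R23 * n \<le> \<gamma> * (R / \<alpha>)\<^sup>2 + R1\<^sup>2 * (R / \<alpha>)\<^sup>2 + R23 * (R / \<alpha>)"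
      using n power_mono[OF n assms(1), of 2] 1 assms(8)
      by (intro add_mono mult_left_mono) auto
    with lhs show ?thesis by (simp add: power_divide mult.commute)
  next
    case 2
    then show ?thesis using lhs by simp
  qed
qed

locale L2_basis = probability_density p Xi
  for p :: "real^'k::finite \<Rightarrow> real" and Xi :: "(real^'k) set" +
  fixes m :: nat and b :: "nat \<Rightarrow> real^'k \<Rightarrow> real"
  assumes b_meas: "\<forall>i<m. b i \<in> borel_measurable borel"
    and b_L2: "\<forall>i<m. set_integrable lborel Xi (\<lambda>y. (b i y)\<^sup>2 * p y)"
begin

lemma Ex_integrable_dominated:
  assumes \<phi>_meas: "\<phi> \<in> borel_measurable borel" and \<phi>_le: "\<forall>y. \<bar>\<phi> y\<bar> \<le> (\<Sum>i<m. (b i y)\<^sup>2) + 1"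
    and h_meas: "set_borel_measurable lborel Xi h" and h_le: "\<forall>y\<in>Xi. \<bar>h y\<bar> \<le> K"
  shows "Ex_integrable p Xi (\<lambda>y. \<phi> y * h y)"
  unfolding Ex_integrable_def
proof (rule set_integrable_bound)
  show "set_integrable lborel Xi (\<lambda>y. \<bar>K\<bar> * ((\<Sum>i<m. (b i y)\<^sup>2) + 1) * p y)"
  proof -
    have "Ex_integrable p Xi (\<lambda>y. \<bar>K\<bar> * ((\<Sum>i<m. (b i y)\<^sup>2) + 1))"
      using b_L2 by (intro Ex_integrable_cmult Ex_integrable_add Ex_integrable_sum Ex_integrable_const)
        (auto simp: Ex_integrable_def)
    then show ?thesis by (simp add: Ex_integrable_def)
  qed
  have "(\<lambda>y. indicator Xi y *\<^sub>R (\<phi> y * h y * p y)) = (\<lambda>y. (\<phi> y * p y) * (indicator Xi y *\<^sub>R h y))"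
    by (auto simp: fun_eq_iff)
  moreover have "(\<lambda>y. (\<phi> y * p y) * (indicator Xi y *\<^sub>R h y)) \<in> borel_measurable lborel"
    using h_meas \<phi>_meas unfolding set_borel_measurable_def by measurable
  ultimately show "set_borel_measurable lborel Xi (\<lambda>y. \<phi> y * h y * p y)"
    unfolding set_borel_measurable_def by simp
  have "norm (\<phi> y * h y * p y) \<le> norm (\<bar>K\<bar> * ((\<Sum>i<m. (b i y)\<^sup>2) + 1) * p y)" if "y \<in> Xi" for y
  proof -
    have "\<bar>\<phi> y\<bar> * \<bar>h y\<bar> \<le> ((\<Sum>i<m. (b i y)\<^sup>2) + 1) * \<bar>K\<bar>"
      using \<phi>_le h_le that by (intro mult_mono) (auto intro: order_trans[OF abs_ge_zero])
    then have "\<bar>\<phi> y\<bar> * \<bar>h y\<bar> * p y \<le> ((\<Sum>i<m. (b i y)\<^sup>2) + 1) * \<bar>K\<bar> * p y"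
      using p_nonneg by (intro mult_right_mono) auto
    then show ?thesis using p_nonneg by (simp add: abs_mult mult_ac sum_nonneg add_nonneg_nonneg)
  qed
  then show "AE y in lborel. y \<in> Xi \<longrightarrow> norm (\<phi> y * h y * p y) \<le> norm (\<bar>K\<bar> * ((\<Sum>i<m. (b i y)\<^sup>2) + 1) * p y)"
    by simp
qed

lemma basis_sq_le_sum: "i < m \<Longrightarrow> (b i y)\<^sup>2 \<le> (\<Sum>j<m. (b j y)\<^sup>2)"
  by (rule member_le_sum) auto

lemma abs_basis_mult_le: "j < m \<Longrightarrow> k < m \<Longrightarrow> \<bar>b j y * b k y\<bar> \<le> (\<Sum>i<m. (b i y)\<^sup>2) + 1"
  using zero_le_power2[of "\<bar>b j y\<bar> - \<bar>b k y\<bar>"] basis_sq_le_sum[of j y] basis_sq_le_sum[of k y]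
  by (simp add: power2_eq_square abs_mult algebra_simps)

lemma abs_basis_le: "j < m \<Longrightarrow> \<bar>b j y\<bar> \<le> (\<Sum>i<m. (b i y)\<^sup>2) + 1"
  using zero_le_power2[of "\<bar>b j y\<bar> - 1"] basis_sq_le_sum[of j y]
  by (simp add: power2_eq_square algebra_simps)

lemma Ex_integrable_bilinear:
  assumes B: "random_bilinear Xi B"
    and "w \<in> tensorSX (Sspace m b)" "v \<in> tensorSX (Sspace m b)"
  shows "Ex_integrable p Xi (\<lambda>y. B (w y) (v y) y)"
proof -
  obtain C where C: "\<forall>y\<in>Xi. \<forall>x z. \<bar>B x z y\<bar> \<le> C * norm x * norm z"
    using B unfolding random_bilinear_def by blast
  obtain z z' where wv: "w = basis_expansion m b z" "v = basis_expansion m b z'"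
    using assms(2,3) unfolding tensorSX_Sspace_eq by blast
  have "Ex_integrable p Xi (\<lambda>y. \<Sum>j<m. \<Sum>k<m. (b j y * b k y) * B (z j) (z' k) y)"
  proof (intro Ex_integrable_sum)
    fix j k assume jk: "j \<in> {..<m}" "k \<in> {..<m}"
    show "Ex_integrable p Xi (\<lambda>y. (b j y * b k y) * B (z j) (z' k) y)"
    proof (rule Ex_integrable_dominated)
      show "(\<lambda>y. b j y * b k y) \<in> borel_measurable borel"
        using b_meas jk by (intro borel_measurable_times) auto
      show "\<forall>y. \<bar>b j y * b k y\<bar> \<le> (\<Sum>i<m. (b i y)\<^sup>2) + 1" using abs_basis_mult_le jk by auto
      show "set_borel_measurable lborel Xi (B (z j) (z' k))" using B unfolding random_bilinear_def by blast
      show "\<forall>y\<in>Xi. \<bar>B (z j) (z' k) y\<bar> \<le> C * norm (z j) * norm (z' k)" using C by blast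
    qed
  qed auto
  moreover have "B (w y) (v y) y = (\<Sum>j<m. \<Sum>k<m. (b j y * b k y) * B (z j) (z' k) y)" if "y \<in> Xi" for y
  proof -
    interpret B: bounded_bilinear "\<lambda>x z. B x z y" using B that unfolding random_bilinear_def by blast
    show ?thesis unfolding wv basis_expansion_def
      by (simp add: B.sum_left B.sum_right B.scaleR_left B.scaleR_right sum_distrib_left mult.assoc)
        (subst sum.swap, simp add: mult.left_commute)
  qed
  ultimately show ?thesis by (subst Ex_integrable_cong[OF Xi_meas]) auto
qed

lemma Ex_integrable_linear:
  assumes F: "random_linear Xi F" and "v \<in> tensorSX (Sspace m b)"
  shows "Ex_integrable p Xi (\<lambda>y. F (v y) y)"
proof -
  obtain C where C: "\<forall>y\<in>Xi. \<forall>x. \<bar>F x y\<bar> \<le> C * norm x"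
    using F unfolding random_linear_def by blast
  obtain z where v: "v = basis_expansion m b z"
    using assms(2) unfolding tensorSX_Sspace_eq by blast
  have "Ex_integrable p Xi (\<lambda>y. \<Sum>j<m. b j y * F (z j) y)"
  proof (intro Ex_integrable_sum)
    fix j assume j: "j \<in> {..<m}"
    show "Ex_integrable p Xi (\<lambda>y. b j y * F (z j) y)"
    proof (rule Ex_integrable_dominated)
      show "b j \<in> borel_measurable borel" using b_meas j by auto
      show "\<forall>y. \<bar>b j y\<bar> \<le> (\<Sum>i<m. (b i y)\<^sup>2) + 1" using abs_basis_le j by auto
      show "set_borel_measurable lborel Xi (F (z j))" using F unfolding random_linear_def by blast
      show "\<forall>y\<in>Xi. \<bar>F (z j) y\<bar> \<le> C * norm (z j)" using C by blast
    qed
  qed auto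
  moreover have "F (v y) y = (\<Sum>j<m. b j y * F (z j) y)" if "y \<in> Xi" for y
  proof -
    interpret F: bounded_linear "\<lambda>x. F x y" using F that unfolding random_linear_def by blast
    show ?thesis unfolding v basis_expansion_def by (simp add: F.sum F.scaleR)
  qed
  ultimately show ?thesis by (subst Ex_integrable_cong[OF Xi_meas]) auto
qed

lemma Ex_integrable_norm_sq:
  fixes v :: "real^'k \<Rightarrow> 'x::real_inner"
  assumes "v \<in> tensorSX (Sspace m b)"
  shows "Ex_integrable p Xi (\<lambda>y. (norm (v y))\<^sup>2)"
  using Ex_integrable_bilinear[OF random_bilinear_inner[OF Xi_meas] assms assms]
  by (simp add: power2_norm_eq_inner)

subsection \<open>Error representation and the variance estimate\<close>

lemma abar_diff_left:
  assumes a: "random_bilinear Xi a"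
    and "w \<in> tensorSX (Sspace m b)" "w' \<in> tensorSX (Sspace m b)" "v \<in> tensorSX (Sspace m b)"
  shows "abar p Xi a (\<lambda>y. w y - w' y) v = abar p Xi a w v - abar p Xi a w' v"
proof -
  have "abar p Xi a (\<lambda>y. w y - w' y) v = Ex p Xi (\<lambda>y. a (w y) (v y) y - a (w' y) (v y) y)"
    unfolding abar_def
  proof (rule Ex_cong[OF Xi_meas])
    fix y assume "y \<in> Xi"
    then interpret a: bounded_bilinear "\<lambda>x z. a x z y" using a unfolding random_bilinear_def by blast
    show "a (w y - w' y) (v y) y = a (w y) (v y) y - a (w' y) (v y) y" by (rule a.diff_left)
  qed
  also have "\<dots> = abar p Xi a w v - abar p Xi a w' v"
    unfolding abar_def
    by (rule Ex_diff[OF Ex_integrable_bilinear[OF a assms(2,4)] Ex_integrable_bilinear[OF a assms(3,4)]])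
  finally show ?thesis .
qed

lemma abs_abar_le:
  fixes a :: "'x::real_inner \<Rightarrow> 'x \<Rightarrow> real^'k \<Rightarrow> real"
  assumes a: "random_bilinear Xi a"
  shows "\<exists>C. \<forall>w\<in>tensorSX (Sspace m b). \<forall>v\<in>tensorSX (Sspace m b).
    \<bar>abar p Xi a w v\<bar> \<le> C * normXb p Xi w * normXb p Xi v"
proof -
  obtain C where C: "\<forall>y\<in>Xi. \<forall>x z. \<bar>a x z y\<bar> \<le> C * norm x * norm z"
    using a unfolding random_bilinear_def by blast
  have "\<bar>abar p Xi a w v\<bar> \<le> \<bar>C\<bar> * normXb p Xi w * normXb p Xi v"
    if wv: "w \<in> tensorSX (Sspace m b)" "v \<in> tensorSX (Sspace m b)" for w v
    unfolding abar_def normXb_def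
  proof (rule Ex_Cauchy_Schwarz)
    fix y assume "y \<in> Xi"
    then have "\<bar>a (w y) (v y) y\<bar> \<le> C * (norm (w y) * norm (v y))" using C by (simp add: mult.assoc)
    also have "\<dots> \<le> \<bar>C\<bar> * (norm (w y) * norm (v y))" by (intro mult_right_mono) auto
    finally show "\<bar>a (w y) (v y) y\<bar> \<le> \<bar>C\<bar> * norm (w y) * norm (v y)" by (simp add: mult.assoc)
  qed (use Ex_integrable_bilinear[OF a wv] Ex_integrable_norm_sq wv in auto)
  then show ?thesis by blast
qed

lemma abs_fbar_le:
  fixes f :: "'x::real_inner \<Rightarrow> real^'k \<Rightarrow> real"
  assumes f: "random_linear Xi f"
  shows "\<exists>C. \<forall>v\<in>tensorSX (Sspace m b). \<bar>fbar p Xi f v\<bar> \<le> C * normXb p Xi v"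
proof -
  obtain C where C: "\<forall>y\<in>Xi. \<forall>x. \<bar>f x y\<bar> \<le> C * norm x"
    using f unfolding random_linear_def by blast
  have "\<bar>fbar p Xi f v\<bar> \<le> \<bar>C\<bar> * normXb p Xi v * sqrt (Ex p Xi (\<lambda>y. 1\<^sup>2))"
    if v: "v \<in> tensorSX (Sspace m b)" for v
    unfolding fbar_def normXb_def
  proof (rule Ex_Cauchy_Schwarz)
    fix y assume "y \<in> Xi"
    then have "\<bar>f (v y) y\<bar> \<le> C * norm (v y)" using C by simp
    also have "\<dots> \<le> \<bar>C\<bar> * norm (v y)" by (intro mult_right_mono) auto
    finally show "\<bar>f (v y) y\<bar> \<le> \<bar>C\<bar> * norm (v y) * 1" by simp
  qed (use Ex_integrable_linear[OF f v] Ex_integrable_norm_sq[OF v] Ex_integrable_const in auto)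
  then show ?thesis by (auto simp: Ex_const)
qed

lemma Ell_eq_abar: "Ell p Xi l w v = abar p Xi (\<lambda>x z y. l x y * l z y) w v"
  unfolding Ell_def abar_def ..

lemma abar_coercive:
  fixes a :: "'x::real_inner \<Rightarrow> 'x \<Rightarrow> real^'k \<Rightarrow> real"
  assumes a: "random_bilinear Xi a" and coercive: "\<forall>y\<in>Xi. \<forall>x. c * (norm x)\<^sup>2 \<le> a x x y"
    and v: "v \<in> tensorSX (Sspace m b)"
  shows "c * (normXb p Xi v)\<^sup>2 \<le> abar p Xi a v v"
proof -
  have "c * (normXb p Xi v)\<^sup>2 = Ex p Xi (\<lambda>y. c * (norm (v y))\<^sup>2)" by (simp add: normXb_sq Ex_cmult)
  also have "\<dots> \<le> abar p Xi a v v" unfolding abar_def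
    using coercive Ex_integrable_bilinear[OF a v v] Ex_integrable_cmult[OF Ex_integrable_norm_sq[OF v]]
    by (intro Ex_mono) auto
  finally show ?thesis .
qed

lemma Var_linear_add:
  assumes l: "random_linear Xi l" and w: "w \<in> tensorSX (Sspace m b)" and e: "e \<in> tensorSX (Sspace m b)"
  shows "Var p Xi (\<lambda>y. l (w y + e y) y) = Var p Xi (\<lambda>y. l (w y) y) + Ell p Xi l e e
    + 2 * Ell p Xi l w e - (fbar p Xi l e)\<^sup>2 - 2 * fbar p Xi l w * fbar p Xi l e"
proof -
  have "l (w y + e y) y = l (w y) y + l (e y) y" if "y \<in> Xi" for y
  proof -
    interpret l: bounded_linear "\<lambda>x. l x y" using l that unfolding random_linear_def by blast
    show ?thesis by (rule l.add)
  qed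
  then have "Var p Xi (\<lambda>y. l (w y + e y) y) = Var p Xi (\<lambda>y. l (w y) y + l (e y) y)"
    by (rule Var_cong)
  also have "\<dots> = Var p Xi (\<lambda>y. l (w y) y) + Ell p Xi l e e
    + 2 * Ell p Xi l w e - (fbar p Xi l e)\<^sup>2 - 2 * fbar p Xi l w * fbar p Xi l e"
    unfolding Ell_def fbar_def
    using Ex_integrable_linear[OF l] Ex_integrable_bilinear[OF random_bilinear_product[OF l l]] w e
    by (intro Var_add) auto
  finally show ?thesis .
qed

lemma dual_bounded_abar_right:
  fixes a :: "'x::real_inner \<Rightarrow> 'x \<Rightarrow> real^'k \<Rightarrow> real"
  assumes "random_bilinear Xi a" "w \<in> tensorSX (Sspace m b)"
  shows "dual_bounded p Xi (tensorSX (Sspace m b)) (\<lambda>v. abar p Xi a w v)"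
proof -
  obtain C where C: "\<forall>w\<in>tensorSX (Sspace m b). \<forall>v\<in>tensorSX (Sspace m b).
      \<bar>abar p Xi a w v\<bar> \<le> C * normXb p Xi w * normXb p Xi v"
    using abs_abar_le[OF assms(1)] by blast
  show ?thesis using C assms(2) by (intro dual_boundedI[where K="C * normXb p Xi w"]) blast
qed

lemma dual_bounded_abar_left:
  fixes a :: "'x::real_inner \<Rightarrow> 'x \<Rightarrow> real^'k \<Rightarrow> real"
  assumes "random_bilinear Xi a" "w \<in> tensorSX (Sspace m b)"
  shows "dual_bounded p Xi (tensorSX (Sspace m b)) (\<lambda>v. abar p Xi a v w)"
proof -
  obtain C where C: "\<forall>v\<in>tensorSX (Sspace m b). \<forall>w\<in>tensorSX (Sspace m b).
      \<bar>abar p Xi a v w\<bar> \<le> C * normXb p Xi v * normXb p Xi w"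
    using abs_abar_le[OF assms(1)] by blast
  show ?thesis
  proof (rule dual_boundedI[where K="C * normXb p Xi w"])
    fix v :: "real^'k \<Rightarrow> 'x" assume "v \<in> tensorSX (Sspace m b)"
    then show "\<bar>abar p Xi a v w\<bar> \<le> C * normXb p Xi w * normXb p Xi v"
      using C assms(2) by (auto simp: mult_ac)
  qed
qed

lemma dual_bounded_fbar:
  fixes f :: "'x::real_inner \<Rightarrow> real^'k \<Rightarrow> real"
  assumes "random_linear Xi f"
  shows "dual_bounded p Xi (tensorSX (Sspace m b)) (\<lambda>v. fbar p Xi f v)"
  using abs_fbar_le[OF assms] unfolding dual_bounded_def by blast

lemma dual_bounded_Ell:
  fixes l :: "'x::real_inner \<Rightarrow> real^'k \<Rightarrow> real"
  assumes "random_linear Xi l" "w \<in> tensorSX (Sspace m b)"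
  shows "dual_bounded p Xi (tensorSX (Sspace m b)) (\<lambda>v. Ell p Xi l w v)"
  unfolding Ell_eq_abar by (rule dual_bounded_abar_right[OF random_bilinear_product[OF assms(1,1)] assms(2)])

lemma variance_error_estimate:
  fixes a :: "'x::real_inner \<Rightarrow> 'x \<Rightarrow> real^'k \<Rightarrow> real" and l :: "'x \<Rightarrow> real^'k \<Rightarrow> real"
  defines "X \<equiv> tensorSX (Sspace m b)"
  assumes a: "random_bilinear Xi a" and coercive: "\<exists>c>0. \<forall>y\<in>Xi. \<forall>x. c * (norm x)\<^sup>2 \<le> a x x y"
    and l: "random_linear Xi l" and e: "e \<in> X"
    and r: "\<And>v. v \<in> X \<Longrightarrow> r v = abar p Xi a e v"
    and bounded: "dual_bounded p Xi X r1" "dual_bounded p Xi X r23"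
  shows "\<bar>Ell p Xi l e e - (r1 e)\<^sup>2 - r23 e\<bar>
    \<le> gamma2_bar p Xi X l * (dual_norm p Xi X r)\<^sup>2 / (alpha_bar p Xi X a)\<^sup>2
      + (dual_norm p Xi X r)\<^sup>2 * (dual_norm p Xi X r1)\<^sup>2 / (alpha_bar p Xi X a)\<^sup>2
      + dual_norm p Xi X r23 * dual_norm p Xi X r / alpha_bar p Xi X a"
proof -
  let ?N = "normXb p Xi"
  obtain c where "c > 0" and coercive_X: "\<forall>v\<in>X. c * (?N v)\<^sup>2 \<le> abar p Xi a v v"
    using coercive abar_coercive[OF a] unfolding X_def by blast
  obtain K where Ell_bounded: "\<forall>w\<in>X. \<forall>v\<in>X. \<bar>Ell p Xi l w v\<bar> \<le> K * ?N w * ?N v"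
    using abs_abar_le[OF random_bilinear_product[OF l l]] unfolding Ell_eq_abar X_def by blast
  have r_bounded: "dual_bounded p Xi X r"
    using dual_bounded_cong[of X r] r dual_bounded_abar_right[OF a e[unfolded X_def]]
    unfolding X_def by blast
  show ?thesis
  proof (rule variance_estimate_arith)
    show "Ell p Xi l e e \<le> gamma2_bar p Xi X l * (?N e)\<^sup>2" by (rule Ell_le_gamma2_bar[OF Ell_bounded e])
    show "\<bar>r1 e\<bar> \<le> dual_norm p Xi X r1 * ?N e" by (rule abs_le_dual_norm[OF bounded(1) e])
    show "\<bar>r23 e\<bar> \<le> dual_norm p Xi X r23 * ?N e" by (rule abs_le_dual_norm[OF bounded(2) e])
    show "alpha_bar p Xi X a * (?N e)\<^sup>2 \<le> dual_norm p Xi X r * ?N e"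
      using alpha_bar_norm_sq_le[OF coercive_X e] abs_le_dual_norm[OF r_bounded e] r[OF e] by linarith
    show "0 < alpha_bar p Xi X a \<and> 0 \<le> gamma2_bar p Xi X l \<or> dual_norm p Xi X r = 0 \<and> ?N e = 0"
      \<comment> \<open>If all of \<open>X\<close> has norm zero, \<open>alpha_bar\<close> and \<open>gamma2_bar\<close> are an infimum and a
        supremum over the empty set and carry no information; then the norms of \<open>e\<close> and \<open>r\<close>
        vanish instead.\<close>
    proof (cases "\<exists>v\<in>X. ?N v \<noteq> 0")
      case True
      then show ?thesis using alpha_bar_ge[OF coercive_X] gamma2_bar_nonneg[OF Ell_bounded] \<open>c > 0\<close>
        by (smt (verit))
    next
      case False
      then show ?thesis using e dual_norm_eq_0[of X p Xi r] by blast
    qed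
  qed (use normXb_nonneg Ell_self_nonneg dual_norm_nonneg bounded r_bounded in auto)
qed

end

theorem mainTheorem6:
  fixes p :: "real^'k::finite \<Rightarrow> real" and Xi :: "(real^'k) set"
    and q :: "'k \<Rightarrow> real \<Rightarrow> real"
    and m :: nat and b :: "nat \<Rightarrow> real^'k \<Rightarrow> real"
    and Xb :: "(real^'k \<Rightarrow> 'x::{real_inner, polish_space}) set"
    and a :: "'x \<Rightarrow> 'x \<Rightarrow> real^'k \<Rightarrow> real"
    and f l :: "'x \<Rightarrow> real^'k \<Rightarrow> real"
    and XR XR1 XR2 XR3 :: "(real^'k \<Rightarrow> 'x) set"
    and u uR u1 u2 u3 :: "real^'k \<Rightarrow> 'x"
    and r r1 r2 r3 :: "(real^'k \<Rightarrow> 'x) \<Rightarrow> real"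
  assumes Xi_meas: "Xi \<in> sets lborel"
    and p_meas: "p \<in> borel_measurable borel"
    and p_nonneg: "\<forall>y. 0 \<le> p y"
    and p_int: "set_integrable lborel Xi p"
    and p_prob: "(LINT y:Xi|lborel. p y) = 1"
    and p_indep: "\<forall>y\<in>Xi. p y = (\<Prod>i\<in>UNIV. q i (y $ i))"
    and b_meas: "\<forall>i<m. b i \<in> borel_measurable borel"
    and b_L2: "\<forall>i<m. set_integrable lborel Xi (\<lambda>y. (b i y)^2 * p y)"
    and Xb_def: "Xb = tensorSX (Sspace m b)"
    and a_bilin: "\<forall>y\<in>Xi. bounded_bilinear (\<lambda>x z. a x z y)"
    and a_bdd: "\<exists>C. \<forall>y\<in>Xi. \<forall>x z. \<bar>a x z y\<bar> \<le> C * norm x * norm z"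
    and a_coer: "\<exists>c>0. \<forall>y\<in>Xi. \<forall>x. c * (norm x)^2 \<le> a x x y"
    and a_meas: "\<forall>x z. set_borel_measurable lborel Xi (\<lambda>y. a x z y)"
    and f_lin: "\<forall>y\<in>Xi. bounded_linear (\<lambda>x. f x y)"
    and f_bdd: "\<exists>C. \<forall>y\<in>Xi. \<forall>x. \<bar>f x y\<bar> \<le> C * norm x"
    and f_meas: "\<forall>x. set_borel_measurable lborel Xi (\<lambda>y. f x y)"
    and l_lin: "\<forall>y\<in>Xi. bounded_linear (\<lambda>x. l x y)"
    and l_bdd: "\<exists>C. \<forall>y\<in>Xi. \<forall>x. \<bar>l x y\<bar> \<le> C * norm x"
    and l_meas: "\<forall>x. set_borel_measurable lborel Xi (\<lambda>y. l x y)"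
    and XR_sub: "lin_subspace_of XR Xb"
    and XR1_sub: "lin_subspace_of XR1 Xb"
    and XR2_sub: "lin_subspace_of XR2 Xb"
    and XR3_sub: "lin_subspace_of XR3 Xb"
    and u_sol: "u \<in> Xb" "\<forall>v\<in>Xb. abar p Xi a u v = fbar p Xi f v"
    and uR_sol: "uR \<in> XR" "\<forall>v\<in>XR. abar p Xi a uR v = fbar p Xi f v"
    and r_def: "r = (\<lambda>v. fbar p Xi f v - abar p Xi a uR v)"
    and u1_sol: "u1 \<in> XR1" "\<forall>v\<in>XR1. abar p Xi a v u1 = - fbar p Xi l v"
    and u2_sol: "u2 \<in> XR2" "\<forall>v\<in>XR2. abar p Xi a v u2 = - 2 * Ell p Xi l uR v"
    and u3_sol: "u3 \<in> XR3"
       "\<forall>v\<in>XR3. abar p Xi a v u3 = - 2 * (fbar p Xi l uR - r u1) * fbar p Xi l v"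
    and r1_def: "r1 = (\<lambda>v. - fbar p Xi l v - abar p Xi a v u1)"
    and r2_def: "r2 = (\<lambda>v. - 2 * Ell p Xi l uR v - abar p Xi a v u2)"
    and r3_def: "r3 = (\<lambda>v. - 2 * (fbar p Xi l uR - r u1) * fbar p Xi l v - abar p Xi a v u3)"
  shows "\<bar>Var p Xi (\<lambda>y. l (u y) y) - Var p Xi (\<lambda>y. l (uR y) y) - (r u1)^2 + r u2 - r u3\<bar>
     \<le> gamma2_bar p Xi Xb l * (dual_norm p Xi Xb r)^2 / (alpha_bar p Xi Xb a)^2
       + (dual_norm p Xi Xb r)^2 * (dual_norm p Xi Xb r1)^2 / (alpha_bar p Xi Xb a)^2
       + dual_norm p Xi Xb (\<lambda>v. r2 v - r3 v) * dual_norm p Xi Xb r / alpha_bar p Xi Xb a"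
proof -
  interpret L2_basis p Xi m b using assms by unfold_locales auto
  have a: "random_bilinear Xi a" using a_bilin a_bdd a_meas unfolding random_bilinear_def by blast
  have l: "random_linear Xi l" using l_lin l_bdd l_meas unfolding random_linear_def by blast
  have in_Xb: "u \<in> Xb" "uR \<in> Xb" "u1 \<in> Xb" "u2 \<in> Xb" "u3 \<in> Xb"
    using XR_sub XR1_sub XR2_sub XR3_sub u_sol uR_sol u1_sol u2_sol u3_sol
    unfolding lin_subspace_of_def by auto
  note in_Xb' = in_Xb[unfolded Xb_def]
  define e where "e = (\<lambda>y. u y - uR y)"
  have e: "e \<in> Xb" unfolding e_def Xb_def using in_Xb'(1,2) by (rule tensorSX_Sspace_diff)
  have r_e: "r v = abar p Xi a e v" if "v \<in> Xb" for v
    using u_sol(2) that abar_diff_left[OF a in_Xb'(1,2)] unfolding r_def e_def Xb_def by simp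
  have "u = (\<lambda>y. uR y + e y)" by (simp add: e_def)
  then have identity: "Var p Xi (\<lambda>y. l (u y) y) - Var p Xi (\<lambda>y. l (uR y) y) - (r u1)\<^sup>2 + r u2 - r u3
      = Ell p Xi l e e - (r1 e)\<^sup>2 - (r2 e - r3 e)"
    using Var_linear_add[OF l in_Xb'(2) e[unfolded Xb_def]] r_e in_Xb unfolding r1_def r2_def r3_def
    by (simp add: power2_eq_square algebra_simps)
  have r1_bounded: "dual_bounded p Xi Xb r1"
    unfolding r1_def Xb_def
    by (intro dual_bounded_diff dual_bounded_uminus dual_bounded_fbar dual_bounded_abar_left)
      (simp_all add: a l in_Xb')
  have r23_bounded: "dual_bounded p Xi Xb (\<lambda>v. r2 v - r3 v)"
    unfolding r2_def r3_def Xb_def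
    by (intro dual_bounded_diff dual_bounded_cmult dual_bounded_fbar dual_bounded_abar_left
        dual_bounded_Ell) (simp_all add: a l in_Xb')
  show ?thesis
    unfolding identity Xb_def
    using variance_error_estimate[OF a a_coer l e[unfolded Xb_def] r_e[unfolded Xb_def]
        r1_bounded[unfolded Xb_def] r23_bounded[unfolded Xb_def]]
    by simp
qed

end
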